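(* For every irreducible $*$-representation $\pi$ of $\mathcal{A}(\mathbb{C}P^2_q)$ by bounded operators on a Hilbert space, either $\ker\pi(p_{11})=\{0\}$, or $\pi(p_{11})=\pi(p_{12})=\pi(p_{13})=0$ (and hence also $\pi(p_{21})=\pi(p_{31})=0$).
   Context: Fix $0<q<1$. $\mathcal{A}(S^5_q)$ is the unital $*$-algebra generated by $z_1,z_2,z_3$ and adjoints with relations $z_iz_j=qz_jz_i$ ($i<j$), $z_i^*z_j=qz_jz_i^*$ ($i\ne j$), $[z_1^*,z_1]=0$, $[z_2^*,z_2]=(1-q^2)z_1z_1^*$, $[z_3^*,z_3]=(1-q^2)(z_1z_1^*+z_2z_2^* )$, $z_1z_1^*+z_2z_2^*+z_3z_3^*=1$. $\mathcal{A}(\mathbb{C}P^2_q)$ is the unital $*$-subalgebra generated by $p_{ij}:=z_i^*z_j$; note $p_{ij}^*=p_{ji}$. *)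

theory Defs
  imports "HOL-Analysis.Analysis"
begin

text \<open>Every complex Hilbert space is unitarily equivalent to l2(I) for some index set I;
  we take I to be an arbitrary type 'i.\<close>

definition ell2 :: "('i \<Rightarrow> complex) set" where
  "ell2 = {x. (\<lambda>k. (cmod (x k))^2) summable_on UNIV}"

definition l2norm :: "('i \<Rightarrow> complex) \<Rightarrow> real" where
  "l2norm x = sqrt (infsum (\<lambda>k. (cmod (x k))^2) UNIV)"

definition l2inner :: "('i \<Rightarrow> complex) \<Rightarrow> ('i \<Rightarrow> complex) \<Rightarrow> complex" where
  "l2inner x y = infsum (\<lambda>k. cnj (x k) * y k) UNIV"

definition bounded_op :: "(('i \<Rightarrow> complex) \<Rightarrow> ('i \<Rightarrow> complex)) \<Rightarrow> bool" where
  "bounded_op T \<longleftrightarrow>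
     (\<forall>x\<in>ell2. T x \<in> ell2) \<and>
     (\<forall>x\<in>ell2. \<forall>y\<in>ell2. T (\<lambda>k. x k + y k) = (\<lambda>k. T x k + T y k)) \<and>
     (\<forall>x\<in>ell2. \<forall>c. T (\<lambda>k. c * x k) = (\<lambda>k. c * T x k)) \<and>
     (\<exists>C. \<forall>x\<in>ell2. l2norm (T x) \<le> C * l2norm x)"

definition is_adjoint :: "(('i \<Rightarrow> complex) \<Rightarrow> ('i \<Rightarrow> complex)) \<Rightarrow> (('i \<Rightarrow> complex) \<Rightarrow> ('i \<Rightarrow> complex)) \<Rightarrow> bool" where
  "is_adjoint S T \<longleftrightarrow> (\<forall>x\<in>ell2. \<forall>y\<in>ell2. l2inner (T x) y = l2inner x (S y))"

definition closed_subspace :: "('i \<Rightarrow> complex) set \<Rightarrow> bool" where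
  "closed_subspace K \<longleftrightarrow> K \<subseteq> ell2 \<and> (\<lambda>k. 0) \<in> K \<and>
     (\<forall>x\<in>K. \<forall>y\<in>K. (\<lambda>k. x k + y k) \<in> K) \<and>
     (\<forall>x\<in>K. \<forall>c. (\<lambda>k. c * x k) \<in> K) \<and>
     (\<forall>s x. (\<forall>n. s n \<in> K) \<and> x \<in> ell2 \<and>
            (\<lambda>n. l2norm (\<lambda>k. s n k - x k)) \<longlonglongrightarrow> 0 \<longrightarrow> x \<in> K)"

text \<open>An element of the free unital complex algebra on an alphabet 'a is represented by a
  formal finite sum of coefficient/word pairs.\<close>

type_synonym 'a ncpoly = "(complex \<times> 'a list) list"

definition nccoeff :: "'a ncpoly \<Rightarrow> 'a list \<Rightarrow> complex" where
  "nccoeff f w = sum_list [fst m. m \<leftarrow> f, snd m = w]"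

definition ncone :: "'a ncpoly" where "ncone = [(1, [])]"
definition ncgen :: "'a \<Rightarrow> 'a ncpoly" where "ncgen a = [(1, [a])]"
definition ncadd :: "'a ncpoly \<Rightarrow> 'a ncpoly \<Rightarrow> 'a ncpoly" where "ncadd f g = f @ g"
definition ncsmult :: "complex \<Rightarrow> 'a ncpoly \<Rightarrow> 'a ncpoly" where
  "ncsmult c f = map (\<lambda>(a, u). (c * a, u)) f"
definition ncsub :: "'a ncpoly \<Rightarrow> 'a ncpoly \<Rightarrow> 'a ncpoly" where
  "ncsub f g = f @ ncsmult (-1) g"
definition ncmul :: "'a ncpoly \<Rightarrow> 'a ncpoly \<Rightarrow> 'a ncpoly" where
  "ncmul f g = concat (map (\<lambda>(a, u). map (\<lambda>(b, v). (a * b, u @ v)) g) f)"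

definition ncsubst :: "('a \<Rightarrow> 'b ncpoly) \<Rightarrow> 'a ncpoly \<Rightarrow> 'b ncpoly" where
  "ncsubst \<sigma> f = concat (map (\<lambda>(a, u). ncsmult a (foldr (\<lambda>l p. ncmul (\<sigma> l) p) u ncone)) f)"

definition in_ideal :: "'a ncpoly set \<Rightarrow> 'a ncpoly \<Rightarrow> bool" where
  "in_ideal R f \<longleftrightarrow> (\<exists>ts :: (complex \<times> 'a list \<times> 'a ncpoly \<times> 'a list) list.
      (\<forall>t\<in>set ts. fst (snd (snd t)) \<in> R) \<and>
      nccoeff f = nccoeff (concat (map (\<lambda>(c, u, r, v). ncsmult c (ncmul (ncmul [(1, u)] r) [(1, v)])) ts)))"

datatype idx = I1 | I2 | I3

fun idxnum :: "idx \<Rightarrow> nat" where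
  "idxnum I1 = 1" | "idxnum I2 = 2" | "idxnum I3 = 3"

datatype gen = Z idx | ZS idx

fun genstar :: "gen \<Rightarrow> gen" where
  "genstar (Z i) = ZS i" | "genstar (ZS i) = Z i"

definition ncstar :: "gen ncpoly \<Rightarrow> gen ncpoly" where
  "ncstar f = map (\<lambda>(a, u). (cnj a, rev (map genstar u))) f"

definition S5_rels :: "real \<Rightarrow> gen ncpoly set" where
  "S5_rels q =
     {ncsub (ncmul (ncgen (Z i)) (ncgen (Z j))) (ncsmult (of_real q) (ncmul (ncgen (Z j)) (ncgen (Z i))))
       | i j. idxnum i < idxnum j}
   \<union> {ncsub (ncmul (ncgen (ZS i)) (ncgen (Z j))) (ncsmult (of_real q) (ncmul (ncgen (Z j)) (ncgen (ZS i))))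
       | i j. i \<noteq> j}
   \<union> {ncsub (ncmul (ncgen (ZS I1)) (ncgen (Z I1))) (ncmul (ncgen (Z I1)) (ncgen (ZS I1))),
      ncsub (ncsub (ncmul (ncgen (ZS I2)) (ncgen (Z I2))) (ncmul (ncgen (Z I2)) (ncgen (ZS I2))))
            (ncsmult (of_real (1 - q^2)) (ncmul (ncgen (Z I1)) (ncgen (ZS I1)))),
      ncsub (ncsub (ncmul (ncgen (ZS I3)) (ncgen (Z I3))) (ncmul (ncgen (Z I3)) (ncgen (ZS I3))))
            (ncsmult (of_real (1 - q^2))
               (ncadd (ncmul (ncgen (Z I1)) (ncgen (ZS I1))) (ncmul (ncgen (Z I2)) (ncgen (ZS I2))))),
      ncsub (ncadd (ncadd (ncmul (ncgen (Z I1)) (ncgen (ZS I1))) (ncmul (ncgen (Z I2)) (ncgen (ZS I2))))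
                   (ncmul (ncgen (Z I3)) (ncgen (ZS I3))))
            ncone}"

definition S5_ideal_gens :: "real \<Rightarrow> gen ncpoly set" where
  "S5_ideal_gens q = S5_rels q \<union> ncstar ` S5_rels q"

definition p_gen :: "idx \<times> idx \<Rightarrow> gen ncpoly" where
  "p_gen ij = ncmul (ncgen (ZS (fst ij))) (ncgen (Z (snd ij)))"

definition CP2_zero :: "real \<Rightarrow> (idx \<times> idx) ncpoly \<Rightarrow> bool" where
  "CP2_zero q f \<longleftrightarrow> in_ideal (S5_ideal_gens q) (ncsubst p_gen f)"

definition evop :: "('a \<Rightarrow> ('i \<Rightarrow> complex) \<Rightarrow> ('i \<Rightarrow> complex)) \<Rightarrow> 'a ncpoly
                    \<Rightarrow> ('i \<Rightarrow> complex) \<Rightarrow> ('i \<Rightarrow> complex)" where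
  "evop P f x = (\<lambda>k. sum_list (map (\<lambda>(a, u). a * foldr P u x k) f))"

text \<open>A (unital) *-representation of A(CP^2_q) by bounded operators on l2('i), given by the
  images P (i,j) = pi(p_ij) of the generators.\<close>
definition CP2_star_rep :: "real \<Rightarrow> (idx \<times> idx \<Rightarrow> ('i \<Rightarrow> complex) \<Rightarrow> ('i \<Rightarrow> complex)) \<Rightarrow> bool" where
  "CP2_star_rep q P \<longleftrightarrow>
     (\<forall>i j. bounded_op (P (i, j))) \<and>
     (\<forall>i j. is_adjoint (P (j, i)) (P (i, j))) \<and>
     (\<forall>f. CP2_zero q f \<longrightarrow> (\<forall>x\<in>ell2. evop P f x = (\<lambda>k. 0)))"

definition irreducible_rep :: "(idx \<times> idx \<Rightarrow> ('i \<Rightarrow> complex) \<Rightarrow> ('i \<Rightarrow> complex)) \<Rightarrow> bool" where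
  "irreducible_rep P \<longleftrightarrow>
     \<not> (\<exists>K. closed_subspace K \<and> K \<noteq> {\<lambda>k. 0} \<and> K \<noteq> ell2 \<and>
            (\<forall>f. \<forall>x\<in>K. evop P f x \<in> K))"

end

theory Submission imports Defs begin

(* Let T = pi(p_11) and K = ker T.  In A(CP^2_q) one has
     p_11 p_1j = q^2 p_1j p_11,   p_j1 p_11 = q^2 p_11 p_j1   (j = 2,3),
     p_11 p_ij = p_ij p_11        (i,j = 2,3),
     p_11 = p_11^2 + p_12 p_21 + p_13 p_31.
   The first three relations show that T (pi(p_ij) x) = 0 whenever T x = 0, so the closed
   subspace K is invariant under every pi(p_ij), hence under all of pi(A(CP^2_q)).  By
   irreducibility K = {0} or K is the whole space.  In the second case T = 0, and the last
   relation gives pi(p_12) pi(p_21) + pi(p_13) pi(p_31) = 0; since pi(p_1j) is the adjoint of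
   pi(p_j1), positivity of the inner product forces pi(p_21) = pi(p_31) = 0, and then
   pi(p_12) = pi(p_13) = 0 by the same argument. *)

section \<open>The Hilbert space l2\<close>

lemma ell2_zero: "(\<lambda>k. 0) \<in> ell2"
  by (simp add: ell2_def)

lemma ell2_add:
  assumes "x \<in> ell2" "y \<in> ell2"
  shows "(\<lambda>k. x k + y k) \<in> ell2"
proof -
  have dominant: "(\<lambda>k. 2 * (cmod (x k))^2 + 2 * (cmod (y k))^2) summable_on UNIV"
    using assms by (intro summable_on_add summable_on_cmult_right) (auto simp: ell2_def)
  have "(cmod (x k + y k))^2 \<le> 2 * (cmod (x k))^2 + 2 * (cmod (y k))^2" for k
  proof -
    have "(cmod (x k + y k))^2 \<le> (cmod (x k) + cmod (y k))^2"
      by (intro power_mono norm_triangle_ineq) simp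
    also have "\<dots> \<le> 2 * (cmod (x k))^2 + 2 * (cmod (y k))^2"
      using sum_squares_ge_zero[of "cmod (x k) - cmod (y k)" 0]
      by (simp add: power2_eq_square algebra_simps)
    finally show ?thesis .
  qed
  thus ?thesis
    unfolding ell2_def mem_Collect_eq by (intro summable_on_comparison_test[OF dominant]) auto
qed

lemma ell2_scale:
  assumes "x \<in> ell2"
  shows "(\<lambda>k. c * x k) \<in> ell2"
proof -
  have "(\<lambda>k. (cmod c)^2 * (cmod (x k))^2) summable_on UNIV"
    using assms by (intro summable_on_cmult_right) (auto simp: ell2_def)
  thus ?thesis by (simp add: ell2_def norm_mult power_mult_distrib)
qed

text \<open>The series defining the inner product converges absolutely (|ab| \<le> |a|^2 + |b|^2).\<close>
lemma l2inner_summable: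
  assumes "x \<in> ell2" "y \<in> ell2"
  shows "(\<lambda>k. cnj (x k) * y k) summable_on UNIV"
proof -
  have dominant: "(\<lambda>k. (cmod (x k))^2 + (cmod (y k))^2) summable_on UNIV"
    using assms by (intro summable_on_add) (auto simp: ell2_def)
  have "norm (cnj (x k) * y k) \<le> (cmod (x k))^2 + (cmod (y k))^2" for k
  proof -
    have "0 \<le> (cmod (x k) - cmod (y k))^2" and "0 \<le> cmod (x k) * cmod (y k)" by simp_all
    hence "cmod (x k) * cmod (y k) \<le> (cmod (x k))^2 + (cmod (y k))^2"
      unfolding power2_diff by linarith
    thus ?thesis by (simp add: norm_mult)
  qed
  hence "(\<lambda>k. norm (cnj (x k) * y k)) summable_on UNIV"
    by (intro summable_on_comparison_test[OF dominant]) auto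
  thus ?thesis by (simp add: summable_on_iff_abs_summable_on_complex)
qed

lemma l2inner_add_right:
  assumes "x \<in> ell2" "y \<in> ell2" "z \<in> ell2"
  shows "l2inner x (\<lambda>k. y k + z k) = l2inner x y + l2inner x z"
  unfolding l2inner_def
  using l2inner_summable[OF assms(1,2)] l2inner_summable[OF assms(1,3)]
  by (simp add: distrib_left infsum_add)

lemma l2inner_zero_right: "l2inner x (\<lambda>k. 0) = 0"
  by (simp add: l2inner_def)

lemma l2inner_self:
  assumes "y \<in> ell2"
  shows "l2inner y y = of_real (infsum (\<lambda>k. (cmod (y k))^2) UNIV)"
proof -
  have "(\<lambda>k. (cmod (y k))^2) summable_on UNIV" using assms by (simp add: ell2_def)
  hence "((\<lambda>k. complex_of_real ((cmod (y k))^2)) has_sum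
           of_real (infsum (\<lambda>k. (cmod (y k))^2) UNIV)) UNIV"
    unfolding has_sum_of_real_iff by (rule has_sum_infsum)
  moreover have "(\<lambda>k. cnj (y k) * y k) = (\<lambda>k. complex_of_real ((cmod (y k))^2))"
    by (rule ext) (metis complex_norm_square mult.commute of_real_power)
  ultimately show ?thesis unfolding l2inner_def by (simp add: infsumI)
qed

lemma l2sq_sum_le_0_imp_zero:
  assumes "y \<in> ell2" "infsum (\<lambda>k. (cmod (y k))^2) UNIV \<le> 0"
  shows "y = (\<lambda>k. 0)"
proof (rule ext)
  fix k
  have "(cmod (y k))^2 = 0"
    using assms by (intro nonneg_infsum_le_0D[OF assms(2)]) (auto simp: ell2_def)
  thus "y k = 0" by simp
qed

lemma l2inner_self_sum_eq_0:
  assumes "y \<in> ell2" "w \<in> ell2" "l2inner y y + l2inner w w = 0"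
  shows "y = (\<lambda>k. 0) \<and> w = (\<lambda>k. 0)"
proof -
  have nonneg: "0 \<le> infsum (\<lambda>k. (cmod (v k))^2) UNIV" for v :: "'i \<Rightarrow> complex"
    by (rule infsum_nonneg) simp
  have "infsum (\<lambda>k. (cmod (y k))^2) UNIV + infsum (\<lambda>k. (cmod (w k))^2) UNIV = 0"
    using assms(3) l2inner_self[OF assms(1)] l2inner_self[OF assms(2)]
    by (metis of_real_add of_real_eq_0_iff)
  thus ?thesis
    using nonneg[of y] nonneg[of w] assms(1,2) l2sq_sum_le_0_imp_zero
    by (metis add_nonneg_eq_0_iff)
qed

section \<open>Bounded operators and adjoints\<close>

lemma bounded_op_ell2: "bounded_op T \<Longrightarrow> x \<in> ell2 \<Longrightarrow> T x \<in> ell2"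
  by (simp add: bounded_op_def)

lemma bounded_op_add:
  "bounded_op T \<Longrightarrow> x \<in> ell2 \<Longrightarrow> y \<in> ell2 \<Longrightarrow> T (\<lambda>k. x k + y k) = (\<lambda>k. T x k + T y k)"
  by (simp add: bounded_op_def)

lemma bounded_op_scale:
  "bounded_op T \<Longrightarrow> x \<in> ell2 \<Longrightarrow> T (\<lambda>k. c * x k) = (\<lambda>k. c * T x k)"
  by (simp add: bounded_op_def)

lemma bounded_op_zero: "bounded_op T \<Longrightarrow> T (\<lambda>k. 0) = (\<lambda>k. 0)"
  using bounded_op_scale[of T "\<lambda>k. 0" 0] ell2_zero by simp

lemma bounded_op_null_limit:
  assumes T: "bounded_op T" and d: "\<And>n. d n \<in> ell2" and y: "y \<in> ell2"
    and Td: "\<And>n. T (d n) = y" and lim: "(\<lambda>n. l2norm (d n)) \<longlonglongrightarrow> 0"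
  shows "y = (\<lambda>k. 0)"
proof -
  obtain C where C: "\<forall>x\<in>ell2. l2norm (T x) \<le> C * l2norm x"
    using T by (auto simp: bounded_op_def)
  have "l2norm y \<le> 0"
  proof (rule tendsto_le[OF trivial_limit_sequentially _ tendsto_const])
    show "(\<lambda>n. C * l2norm (d n)) \<longlonglongrightarrow> 0" using lim tendsto_mult_right_zero by blast
    show "\<forall>\<^sub>F n in sequentially. l2norm y \<le> C * l2norm (d n)"
      using C d Td by (intro always_eventually allI) metis
  qed
  hence "infsum (\<lambda>k. (cmod (y k))^2) UNIV \<le> 0" by (simp add: l2norm_def)
  thus ?thesis using l2sq_sum_le_0_imp_zero y by blast
qed

lemma bounded_op_kernel_closed:
  assumes T: "bounded_op T"
  shows "closed_subspace {x \<in> ell2. T x = (\<lambda>k. 0)}"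
  unfolding closed_subspace_def
proof (intro conjI ballI allI impI)
  show "(\<lambda>k. 0) \<in> {x \<in> ell2. T x = (\<lambda>k. 0)}"
    using ell2_zero bounded_op_zero[OF T] by auto
next
  fix x y assume "x \<in> {x \<in> ell2. T x = (\<lambda>k. 0)}" "y \<in> {x \<in> ell2. T x = (\<lambda>k. 0)}"
  thus "(\<lambda>k. x k + y k) \<in> {x \<in> ell2. T x = (\<lambda>k. 0)}"
    using ell2_add bounded_op_add[OF T] by auto
next
  fix x c assume "x \<in> {x \<in> ell2. T x = (\<lambda>k. 0)}"
  thus "(\<lambda>k. c * x k) \<in> {x \<in> ell2. T x = (\<lambda>k. 0)}"
    using ell2_scale bounded_op_scale[OF T] by auto
next
  fix s x
  assume a: "(\<forall>n. s n \<in> {x \<in> ell2. T x = (\<lambda>k. 0)}) \<and> x \<in> ell2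
             \<and> (\<lambda>n. l2norm (\<lambda>k. s n k - x k)) \<longlonglongrightarrow> 0"
  define d where "d n = (\<lambda>k. s n k + (-1) * x k)" for n
  have mx: "(\<lambda>k. -1 * x k) \<in> ell2" using a ell2_scale by blast
  have d_ell2: "d n \<in> ell2" for n using a mx ell2_add unfolding d_def by blast
  have Td: "T (d n) = (\<lambda>k. - T x k)" for n
    using a mx bounded_op_add[OF T, of "s n" "\<lambda>k. -1 * x k"] bounded_op_scale[OF T, of x "-1"]
    unfolding d_def by simp
  have "(\<lambda>k. - T x k) = (\<lambda>k. 0)"
    using a by (intro bounded_op_null_limit[OF T d_ell2 _ Td])
      (auto simp: d_def ell2_scale[of "T x" "-1", simplified] bounded_op_ell2[OF T])
  thus "x \<in> {x \<in> ell2. T x = (\<lambda>k. 0)}" using a by (simp add: fun_eq_iff)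
qed auto

text \<open>Positivity of S_1 T_1 + S_2 T_2 when S_i = T_i^*: the equation
  S_1 (T_1 x) + S_2 (T_2 x) = 0 gives \<parallel>T_1 x\<parallel>^2 + \<parallel>T_2 x\<parallel>^2 = 0.\<close>
lemma adjoint_sum_kernel:
  assumes bT: "bounded_op T\<^sub>1" "bounded_op T\<^sub>2" and bS: "bounded_op S\<^sub>1" "bounded_op S\<^sub>2"
    and adj: "is_adjoint S\<^sub>1 T\<^sub>1" "is_adjoint S\<^sub>2 T\<^sub>2" and x: "x \<in> ell2"
    and sum0: "(\<lambda>k. S\<^sub>1 (T\<^sub>1 x) k + S\<^sub>2 (T\<^sub>2 x) k) = (\<lambda>k. 0)"
  shows "T\<^sub>1 x = (\<lambda>k. 0) \<and> T\<^sub>2 x = (\<lambda>k. 0)"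
proof (rule l2inner_self_sum_eq_0)
  show y: "T\<^sub>1 x \<in> ell2" "T\<^sub>2 x \<in> ell2" using bT x bounded_op_ell2 by auto
  have "l2inner (T\<^sub>1 x) (T\<^sub>1 x) + l2inner (T\<^sub>2 x) (T\<^sub>2 x)
        = l2inner x (S\<^sub>1 (T\<^sub>1 x)) + l2inner x (S\<^sub>2 (T\<^sub>2 x))"
    using adj x y by (simp add: is_adjoint_def)
  also have "\<dots> = l2inner x (\<lambda>k. S\<^sub>1 (T\<^sub>1 x) k + S\<^sub>2 (T\<^sub>2 x) k)"
    using x y bS by (simp add: l2inner_add_right bounded_op_ell2)
  also have "\<dots> = 0" by (simp add: sum0 l2inner_zero_right)
  finally show "l2inner (T\<^sub>1 x) (T\<^sub>1 x) + l2inner (T\<^sub>2 x) (T\<^sub>2 x) = 0" .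
qed

lemma adjoint_kernel:
  assumes "bounded_op T" "bounded_op S" "is_adjoint S T" "x \<in> ell2" "S (T x) = (\<lambda>k. 0)"
  shows "T x = (\<lambda>k. 0)"
  using adjoint_sum_kernel[of T T S S x] assms by simp

section \<open>Relations in A(CP^2_q)\<close>

lemma nccoeff_Nil [simp]: "nccoeff [] w = 0"
  by (simp add: nccoeff_def)

lemma nccoeff_Cons [simp]: "nccoeff ((c, u) # f) w = (if w = u then c else 0) + nccoeff f w"
  by (auto simp: nccoeff_def)

definition rel_zz :: "real \<Rightarrow> idx \<Rightarrow> idx \<Rightarrow> gen ncpoly" where
  "rel_zz q i j = ncsub (ncmul (ncgen (Z i)) (ncgen (Z j)))
                        (ncsmult (of_real q) (ncmul (ncgen (Z j)) (ncgen (Z i))))"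

definition rel_zsz :: "real \<Rightarrow> idx \<Rightarrow> idx \<Rightarrow> gen ncpoly" where
  "rel_zsz q i j = ncsub (ncmul (ncgen (ZS i)) (ncgen (Z j)))
                         (ncsmult (of_real q) (ncmul (ncgen (Z j)) (ncgen (ZS i))))"

definition rel_normal1 :: "gen ncpoly" where
  "rel_normal1 = ncsub (ncmul (ncgen (ZS I1)) (ncgen (Z I1))) (ncmul (ncgen (Z I1)) (ncgen (ZS I1)))"

definition rel_sphere :: "gen ncpoly" where
  "rel_sphere = ncsub (ncadd (ncadd (ncmul (ncgen (Z I1)) (ncgen (ZS I1)))
                                    (ncmul (ncgen (Z I2)) (ncgen (ZS I2))))
                             (ncmul (ncgen (Z I3)) (ncgen (ZS I3)))) ncone"

lemma S5_rels_in_ideal_gens: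
  "r \<in> S5_rels q \<Longrightarrow> r \<in> S5_ideal_gens q"
  "r \<in> S5_rels q \<Longrightarrow> ncstar r \<in> S5_ideal_gens q"
  by (simp_all add: S5_ideal_gens_def)

lemma rel_zz_in: "idxnum i < idxnum j \<Longrightarrow> rel_zz q i j \<in> S5_rels q"
  unfolding rel_zz_def S5_rels_def by auto

lemma rel_zsz_in: "i \<noteq> j \<Longrightarrow> rel_zsz q i j \<in> S5_rels q"
  unfolding rel_zsz_def S5_rels_def by auto

lemma rel_normal1_in: "rel_normal1 \<in> S5_rels q"
  unfolding rel_normal1_def S5_rels_def by auto

lemma rel_sphere_in: "rel_sphere \<in> S5_rels q"
  unfolding rel_sphere_def S5_rels_def by auto

lemmas nc_unfold = rel_zz_def rel_zsz_def rel_normal1_def rel_sphere_def ncsub_def ncmul_def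
  ncsmult_def ncgen_def ncadd_def ncone_def ncstar_def ncsubst_def p_gen_def

lemma CP2_rel_p11_p1j:
  "j \<noteq> I1 \<Longrightarrow> CP2_zero q [(1, [(I1,I1), (I1,j)]), (- of_real (q^2), [(I1,j), (I1,I1)])]"
  unfolding CP2_zero_def in_ideal_def
proof (intro exI conjI)
  assume j: "j \<noteq> I1"
  let ?ts = "[(1, [ZS I1, Z I1], rel_zsz q I1 j, []),
              (of_real q, [ZS I1], rel_zz q I1 j, [ZS I1]),
              (- of_real (q^2), [ZS I1, Z j], rel_normal1, [])]"
  show "\<forall>t\<in>set ?ts. fst (snd (snd t)) \<in> S5_ideal_gens q"
    using j rel_zz_in rel_zsz_in rel_normal1_in S5_rels_in_ideal_gens by (cases j) auto
  show "nccoeff (ncsubst p_gen [(1, [(I1,I1), (I1,j)]), (- of_real (q^2), [(I1,j), (I1,I1)])])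
        = nccoeff (concat (map (\<lambda>(c, u, r, v). ncsmult c (ncmul (ncmul [(1, u)] r) [(1, v)])) ?ts))"
    using j by (intro ext) (simp add: nc_unfold; auto simp: algebra_simps power2_eq_square)
qed

text \<open>p_j1 p_11 = q^2 p_11 p_j1 for j \<noteq> 1 (the adjoint of the previous relation).\<close>
lemma CP2_rel_pj1_p11:
  "j \<noteq> I1 \<Longrightarrow> CP2_zero q [(1, [(j,I1), (I1,I1)]), (- of_real (q^2), [(I1,I1), (j,I1)])]"
  unfolding CP2_zero_def in_ideal_def
proof (intro exI conjI)
  assume j: "j \<noteq> I1"
  let ?ts = "[(1, [], ncstar (rel_zsz q I1 j), [ZS I1, Z I1]),
              (of_real q, [Z I1], ncstar (rel_zz q I1 j), [Z I1]),
              (- of_real (q^2), [], ncstar rel_normal1, [ZS j, Z I1])]"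
  show "\<forall>t\<in>set ?ts. fst (snd (snd t)) \<in> S5_ideal_gens q"
    using j rel_zz_in rel_zsz_in rel_normal1_in S5_rels_in_ideal_gens by (cases j) auto
  show "nccoeff (ncsubst p_gen [(1, [(j,I1), (I1,I1)]), (- of_real (q^2), [(I1,I1), (j,I1)])])
        = nccoeff (concat (map (\<lambda>(c, u, r, v). ncsmult c (ncmul (ncmul [(1, u)] r) [(1, v)])) ?ts))"
    using j by (intro ext) (simp add: nc_unfold; auto simp: algebra_simps power2_eq_square)
qed

lemma CP2_rel_p11_pij:
  "q \<noteq> 0 \<Longrightarrow> i \<noteq> I1 \<Longrightarrow> j \<noteq> I1 \<Longrightarrow> CP2_zero q [(1, [(I1,I1), (i,j)]), (-1, [(i,j), (I1,I1)])]"
  unfolding CP2_zero_def in_ideal_def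
proof (intro exI conjI)
  assume ij: "i \<noteq> I1" "j \<noteq> I1" and q: "q \<noteq> 0"
  let ?ts = "[(1 / of_real q, [ZS i], rel_zsz q I1 j, [Z I1]),
              (-1 / of_real q, [], ncstar (rel_zz q I1 i), [Z j, Z I1]),
              (1 / of_real q, [ZS I1, ZS i], rel_zz q I1 j, []),
              (-1 / of_real q, [ZS I1], rel_zsz q i I1, [Z j])]"
  show "\<forall>t\<in>set ?ts. fst (snd (snd t)) \<in> S5_ideal_gens q"
    using ij rel_zz_in rel_zsz_in S5_rels_in_ideal_gens by (cases i; cases j) auto
  show "nccoeff (ncsubst p_gen [(1, [(I1,I1), (i,j)]), (-1, [(i,j), (I1,I1)])])
        = nccoeff (concat (map (\<lambda>(c, u, r, v). ncsmult c (ncmul (ncmul [(1, u)] r) [(1, v)])) ?ts))"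
    using q ij by (intro ext) (simp add: nc_unfold; auto simp: field_simps power2_eq_square)
qed

text \<open>p_11 = p_11^2 + p_12 p_21 + p_13 p_31, i.e. z_1^* (z_1 z_1^* + z_2 z_2^* + z_3 z_3^*) z_1 = z_1^* z_1.\<close>
lemma CP2_rel_p11_square:
  "CP2_zero q [(1, [(I1,I1)]), (-1, [(I1,I1), (I1,I1)]), (-1, [(I1,I2), (I2,I1)]), (-1, [(I1,I3), (I3,I1)])]"
  unfolding CP2_zero_def in_ideal_def
proof (intro exI conjI)
  let ?ts = "[(-1, [ZS I1], rel_sphere, [Z I1])]"
  show "\<forall>t\<in>set ?ts. fst (snd (snd t)) \<in> S5_ideal_gens q"
    using rel_sphere_in S5_rels_in_ideal_gens by auto
  show "nccoeff (ncsubst p_gen [(1, [(I1,I1)]), (-1, [(I1,I1), (I1,I1)]), (-1, [(I1,I2), (I2,I1)]),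
                                (-1, [(I1,I3), (I3,I1)])])
        = nccoeff (concat (map (\<lambda>(c, u, r, v). ncsmult c (ncmul (ncmul [(1, u)] r) [(1, v)])) ?ts))"
    by (rule ext) (simp add: nc_unfold; auto simp: algebra_simps)
qed

section \<open>Consequences for representations\<close>

lemma evop_Nil [simp]: "evop P [] x = (\<lambda>k. 0)"
  by (simp add: evop_def)

lemma evop_Cons [simp]: "evop P ((a, u) # f) x = (\<lambda>k. a * foldr P u x k + evop P f x k)"
  by (simp add: evop_def)

text \<open>A closed subspace invariant under the generators is invariant under all of pi(A),
  so for an irreducible representation it is trivial.\<close>
lemma irreducible_invariant_subspace:
  assumes irr: "irreducible_rep P" and K: "closed_subspace K"
    and inv: "\<And>g x. x \<in> K \<Longrightarrow> P g x \<in> K"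
  shows "K = {\<lambda>k. 0} \<or> K = ell2"
proof -
  have word: "foldr P u x \<in> K" if "x \<in> K" for u x
    using that by (induction u) (auto intro: inv)
  have "evop P f x \<in> K" if "x \<in> K" for f x
  proof (induction f)
    case Nil thus ?case using K by (simp add: closed_subspace_def)
  next
    case (Cons m f)
    obtain a u where "m = (a, u)" by (cases m)
    with Cons word[OF that] K show ?case by (simp add: closed_subspace_def)
  qed
  thus ?thesis using irr K unfolding irreducible_rep_def by blast
qed

lemma p11_kernel_invariant:
  assumes rep: "CP2_star_rep q P" and q: "q \<noteq> 0"
    and x: "x \<in> ell2" and Tx: "P (I1, I1) x = (\<lambda>k. 0)"
  shows "P (I1, I1) (P (i, j) x) = (\<lambda>k. 0)"
proof -
  have zero: "\<And>f. CP2_zero q f \<Longrightarrow> evop P f x = (\<lambda>k. 0)"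
    using rep x by (simp add: CP2_star_rep_def)
  have P0: "P g (\<lambda>k. 0) = (\<lambda>k. 0)" for g
    using rep bounded_op_zero unfolding CP2_star_rep_def by (metis prod.collapse)
  consider "i = I1" "j = I1" | "i = I1" "j \<noteq> I1" | "i \<noteq> I1" "j = I1" | "i \<noteq> I1" "j \<noteq> I1"
    by blast
  thus ?thesis
  proof cases
    case 1 thus ?thesis using Tx P0 by simp
  next
    case 2 thus ?thesis using zero[OF CP2_rel_p11_p1j[OF 2(2)]] by (simp add: Tx P0 fun_eq_iff)
  next
    case 3 thus ?thesis using zero[OF CP2_rel_pj1_p11[OF 3(1)]] q by (simp add: Tx P0 fun_eq_iff)
  next
    case 4 thus ?thesis using zero[OF CP2_rel_p11_pij[OF q 4]] by (simp add: Tx P0 fun_eq_iff)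
  qed
qed

lemma p11_zero_imp_first_row_column_zero:
  assumes rep: "CP2_star_rep q P" and T0: "\<forall>x\<in>ell2. P (I1, I1) x = (\<lambda>k. 0)"
  shows "\<forall>x\<in>ell2. P (I1, I2) x = (\<lambda>k. 0) \<and> P (I1, I3) x = (\<lambda>k. 0)
                  \<and> P (I2, I1) x = (\<lambda>k. 0) \<and> P (I3, I1) x = (\<lambda>k. 0)"
proof -
  have bnd: "bounded_op (P (i, j))" and adj: "is_adjoint (P (j, i)) (P (i, j))" for i j
    using rep by (auto simp: CP2_star_rep_def)
  have column: "P (I2, I1) x = (\<lambda>k. 0) \<and> P (I3, I1) x = (\<lambda>k. 0)" if x: "x \<in> ell2" for x
  proof (rule adjoint_sum_kernel[OF bnd bnd bnd bnd adj adj x])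
    have "evop P [(1, [(I1,I1)]), (-1, [(I1,I1), (I1,I1)]), (-1, [(I1,I2), (I2,I1)]),
                  (-1, [(I1,I3), (I3,I1)])] x = (\<lambda>k. 0)"
      using rep x CP2_rel_p11_square[of q] unfolding CP2_star_rep_def by blast
    hence "- P (I1, I2) (P (I2, I1) x) k - P (I1, I3) (P (I3, I1) x) k = 0" for k
      using T0 x bounded_op_zero[OF bnd] by (simp add: fun_eq_iff)
    thus "(\<lambda>k. P (I1, I2) (P (I2, I1) x) k + P (I1, I3) (P (I3, I1) x) k) = (\<lambda>k. 0)"
      by (simp add: fun_eq_iff neg_eq_iff_add_eq_0)
  qed
  have row: "P (I1, j) x = (\<lambda>k. 0)" if x: "x \<in> ell2" and j: "j = I2 \<or> j = I3" for x j
    using adjoint_kernel[OF bnd bnd adj x] column bounded_op_ell2[OF bnd x] j by auto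
  show ?thesis using column row by blast
qed

theorem lemmaD2:
  fixes q :: real
    and P :: "idx \<times> idx \<Rightarrow> ('i \<Rightarrow> complex) \<Rightarrow> ('i \<Rightarrow> complex)"
  assumes "0 < q" and "q < 1"
    and "CP2_star_rep q P"
    and "irreducible_rep P"
  shows "{x \<in> ell2. P (I1, I1) x = (\<lambda>k. 0)} = {\<lambda>k. 0}
         \<or> (\<forall>x\<in>ell2. P (I1, I1) x = (\<lambda>k. 0) \<and> P (I1, I2) x = (\<lambda>k. 0) \<and> P (I1, I3) x = (\<lambda>k. 0)
                    \<and> P (I2, I1) x = (\<lambda>k. 0) \<and> P (I3, I1) x = (\<lambda>k. 0))"
proof -
  define K where "K = {x \<in> ell2. P (I1, I1) x = (\<lambda>k. 0)}"
  have bnd: "bounded_op (P g)" for g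
    using assms(3) by (cases g) (simp add: CP2_star_rep_def)
  have "closed_subspace K"
    unfolding K_def by (rule bounded_op_kernel_closed[OF bnd])
  moreover have "P g x \<in> K" if "x \<in> K" for g x
    using that p11_kernel_invariant[OF assms(3)] assms(1) bounded_op_ell2[OF bnd]
    by (cases g) (auto simp: K_def)
  ultimately have "K = {\<lambda>k. 0} \<or> K = ell2"
    using irreducible_invariant_subspace[OF assms(4)] by blast
  thus ?thesis
  proof
    assume "K = ell2"
    hence "\<forall>x\<in>ell2. P (I1, I1) x = (\<lambda>k. 0)" by (auto simp: K_def)
    thus ?thesis using p11_zero_imp_first_row_column_zero[OF assms(3)] by blast
  qed (simp add: K_def)
qed

end
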